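(* Let $\mathfrak h\subset\mathfrak g$ be a Lie subalgebra, $\mathfrak p$ its $h_0$-orthogonal complement, and let $\Psi$ be the $h_0$-orthogonal projection onto $\mathfrak h$, so $\Phi_t=(I-t\Psi)^{-1}$ and $h_t(X,Y)=h_0\big(\tfrac1{1-t}X^{\mathfrak h}+X^{\mathfrak p},Y\big)$. Then for all $X,Y\in\mathfrak g$ and all $t<1$, $$\kappa(t)=\tfrac14|[X,Y]|^2-\tfrac34|[X,Y]^{\mathfrak h}|^2t+\tfrac34|[X^{\mathfrak h},Y^{\mathfrak h}]|^2t^2-\tfrac14|[X^{\mathfrak h},Y^{\mathfrak h}]|^2t^3-\tfrac34|[X^{\mathfrak p},Y^{\mathfrak p}]^{\mathfrak h}|^2\frac{t^2}{1-t}.$$ In particular, if $\mathfrak h$ is abelian, $\kappa(t)=\tfrac14|[X,Y]|^2-\tfrac34|[X,Y]^{\mathfrak h}|^2\,\frac{t}{1-t}$ for $-\infty<t<1$.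
   Context: $G$ is a compact Lie group with Lie algebra $\mathfrak g$ and bi-invariant metric $h_0=\langle\cdot,\cdot\rangle$, $|Z|^2=\langle Z,Z\rangle$. For $Z\in\mathfrak g$, $Z^{\mathfrak h}$ and $Z^{\mathfrak p}$ denote the $h_0$-orthogonal projections onto $\mathfrak h$ and $\mathfrak p=\mathfrak h^\perp$. $h_t$ is the left-invariant metric with $h_t(X,Y)=\langle\Phi_tX,Y\rangle$ on $\mathfrak g$. The unnormalized sectional curvature is $k_h(Z_1,Z_2)=h(R_h(Z_1,Z_2)Z_2,Z_1)$, and for fixed $X,Y$, $\kappa(t)=k_{h_t}(\Phi_t^{-1}X,\Phi_t^{-1}Y)$. *)

theory Defs
  imports "HOL-Analysis.Analysis"
begin

text \<open>Algebraic model of a compact Lie group with bi-invariant metric: the Lie algebra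
  is a finite-dimensional real inner product space (inner product = h0) with a Lie
  bracket b for which ad is skew-adjoint.  Left-invariant metrics are forms on the
  Lie algebra; Levi-Civita connection and curvature of left-invariant fields are
  given by the Koszul formula.\<close>

definition lie_bracket :: "('a::euclidean_space \<Rightarrow> 'a \<Rightarrow> 'a) \<Rightarrow> bool" where
  "lie_bracket b \<longleftrightarrow> bilinear b \<and> (\<forall>x y. b x y = - b y x)
     \<and> (\<forall>x y z. b x (b y z) + b y (b z x) + b z (b x y) = 0)"

definition bi_invariant :: "('a::euclidean_space \<Rightarrow> 'a \<Rightarrow> 'a) \<Rightarrow> bool" where
  "bi_invariant b \<longleftrightarrow> (\<forall>x y z. inner (b x y) z = inner x (b y z))"

definition lie_subalgebra :: "('a::euclidean_space \<Rightarrow> 'a \<Rightarrow> 'a) \<Rightarrow> 'a set \<Rightarrow> bool" where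
  "lie_subalgebra b H \<longleftrightarrow> subspace H \<and> (\<forall>x\<in>H. \<forall>y\<in>H. b x y \<in> H)"

definition oproj :: "'a::euclidean_space set \<Rightarrow> 'a \<Rightarrow> 'a" where
  "oproj H x = (THE y. y \<in> H \<and> (\<forall>z\<in>H. inner (x - y) z = 0))"

text \<open>Levi-Civita connection of the left-invariant metric g on left-invariant fields
  (Koszul formula): 2 g(nabla_X Y, W) = g([X,Y],W) - g([Y,W],X) + g([W,X],Y).\<close>
definition lc_nabla :: "('a::euclidean_space \<Rightarrow> 'a \<Rightarrow> 'a) \<Rightarrow> ('a \<Rightarrow> 'a \<Rightarrow> real) \<Rightarrow> 'a \<Rightarrow> 'a \<Rightarrow> 'a" where
  "lc_nabla b g X Y = (THE Z. \<forall>W. g Z W = (g (b X Y) W - g (b Y W) X + g (b W X) Y) / 2)"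

definition curv :: "('a::euclidean_space \<Rightarrow> 'a \<Rightarrow> 'a) \<Rightarrow> ('a \<Rightarrow> 'a \<Rightarrow> real) \<Rightarrow> 'a \<Rightarrow> 'a \<Rightarrow> 'a \<Rightarrow> 'a" where
  "curv b g X Y Z = lc_nabla b g X (lc_nabla b g Y Z) - lc_nabla b g Y (lc_nabla b g X Z)
     - lc_nabla b g (b X Y) Z"

text \<open>Unnormalized sectional curvature k_g(Z1,Z2) = g(R(Z1,Z2)Z2, Z1).\<close>
definition sec_curv :: "('a::euclidean_space \<Rightarrow> 'a \<Rightarrow> 'a) \<Rightarrow> ('a \<Rightarrow> 'a \<Rightarrow> real) \<Rightarrow> 'a \<Rightarrow> 'a \<Rightarrow> real" where
  "sec_curv b g Z1 Z2 = g (curv b g Z1 Z2 Z2) Z1"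

text \<open>Phi_t = (I - t Psi)^{-1}, i.e. Phi_t X = X^h/(1-t) + X^p, and its inverse I - t Psi.\<close>
definition Phi :: "'a::euclidean_space set \<Rightarrow> real \<Rightarrow> 'a \<Rightarrow> 'a" where
  "Phi H t X = (1 / (1 - t)) *\<^sub>R oproj H X + (X - oproj H X)"

definition Phi_inv :: "'a::euclidean_space set \<Rightarrow> real \<Rightarrow> 'a \<Rightarrow> 'a" where
  "Phi_inv H t X = X - t *\<^sub>R oproj H X"

definition ht :: "'a::euclidean_space set \<Rightarrow> real \<Rightarrow> 'a \<Rightarrow> 'a \<Rightarrow> real" where
  "ht H t X Y = inner (Phi H t X) Y"

definition kappa :: "('a::euclidean_space \<Rightarrow> 'a \<Rightarrow> 'a) \<Rightarrow> 'a set \<Rightarrow> 'a \<Rightarrow> 'a \<Rightarrow> real \<Rightarrow> real" where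
  "kappa b H X Y t = sec_curv b (ht H t) (Phi_inv H t X) (Phi_inv H t Y)"

end

theory Submission
  imports Defs
begin

text \<open>For a left-invariant metric \<open>\<langle>f\<cdot>, \<cdot>\<rangle>\<close> with \<open>f\<close> self-adjoint and invertible, the
  Koszul formula gives \<open>\<nabla>\<^sub>U V = [U,V]/2 + f\<^sup>-\<^sup>1 B(U,V)\<close> with
  \<open>B(U,V) = ([U,fV] + [V,fU])/2\<close>, and from this Puettmann's formula for the sectional
  curvature. For \<open>f = \<Phi>\<^sub>t\<close> the vectors \<open>\<Phi>\<^sub>t\<^sup>-\<^sup>1X = (1-t)X\<^sup>h + X\<^sup>p\<close> are explicit;
  since \<open>ad h\<close> preserves \<open>p\<close> and \<open>\<Phi>\<^sub>t\<^sup>-\<^sup>1\<close> fixes \<open>p\<close>, each term of the formula becomes a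
  polynomial in \<open>t\<close> and \<open>1/(1-t)\<close> whose coefficients are inner products of
  \<open>[X\<^sup>h,Y\<^sup>h]\<close>, \<open>[X\<^sup>h,Y\<^sup>p] + [X\<^sup>p,Y\<^sup>h]\<close> and the two components of \<open>[X\<^sup>p,Y\<^sup>p]\<close>. The
  Jacobi identity rewrites the one remaining cross term
  \<open>\<langle>[X\<^sup>h,X\<^sup>p],[Y\<^sup>h,Y\<^sup>p]\<rangle>\<close> in these terms.\<close>

lemma orthogonal_comp_inner:
  "z \<in> H\<^sup>\<bottom> \<Longrightarrow> y \<in> H \<Longrightarrow> inner y z = 0"
  "z \<in> H\<^sup>\<bottom> \<Longrightarrow> y \<in> H \<Longrightarrow> inner z y = 0"
  by (auto simp: orthogonal_comp_def orthogonal_def inner_commute)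

lemma orthogonal_comp_self_eq_0:
  "y \<in> H \<Longrightarrow> y \<in> H\<^sup>\<bottom> \<Longrightarrow> y = 0"
  using orthogonal_comp_inner(1) by fastforce

lemma oproj_eqI:
  assumes "subspace H" "y \<in> H" "x - y \<in> H\<^sup>\<bottom>"
  shows "oproj H x = y"
  unfolding oproj_def
proof (rule the_equality)
  show "y \<in> H \<and> (\<forall>z\<in>H. inner (x - y) z = 0)"
    using assms orthogonal_comp_inner(2) by blast
next
  fix y' assume y': "y' \<in> H \<and> (\<forall>z\<in>H. inner (x - y') z = 0)"
  then have "x - y' \<in> H\<^sup>\<bottom>"
    by (auto simp: orthogonal_comp_def orthogonal_def inner_commute)
  then have "y - y' \<in> H\<^sup>\<bottom>"
    using assms(3) subspace_diff[OF subspace_orthogonal_comp] by fastforce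
  moreover have "y - y' \<in> H"
    using assms y' subspace_diff by blast
  ultimately show "y' = y"
    using orthogonal_comp_self_eq_0 by fastforce
qed

lemma oproj_add_orthogonal:
  "subspace H \<Longrightarrow> y \<in> H \<Longrightarrow> z \<in> H\<^sup>\<bottom> \<Longrightarrow> oproj H (y + z) = y"
  by (rule oproj_eqI) auto

lemma oproj_orthogonal_comp: "subspace H \<Longrightarrow> z \<in> H\<^sup>\<bottom> \<Longrightarrow> oproj H z = 0"
  using oproj_add_orthogonal[of H 0 z] by (simp add: subspace_0)

lemma oproj_in:
  assumes "subspace H"
  shows "oproj H x \<in> H" and "x - oproj H x \<in> H\<^sup>\<bottom>"
proof -
  obtain y z where "y \<in> H" "z \<in> H\<^sup>\<bottom>" "x = y + z"
    using subspace_sum_orthogonal_comp[OF assms] by (metis UNIV_I set_plus_elim)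
  then show "oproj H x \<in> H" and "x - oproj H x \<in> H\<^sup>\<bottom>"
    using oproj_add_orthogonal[OF assms] by auto
qed

lemma linear_oproj:
  assumes "subspace H"
  shows "linear (oproj H)"
proof (rule linearI)
  fix u v :: 'a and c :: real
  have "(u - oproj H u) + (v - oproj H v) \<in> H\<^sup>\<bottom>"
    using assms oproj_in(2) subspace_add[OF subspace_orthogonal_comp] by blast
  then show "oproj H (u + v) = oproj H u + oproj H v"
    using assms by (intro oproj_eqI subspace_add oproj_in(1)) (auto simp: algebra_simps)
  show "oproj H (c *\<^sub>R u) = c *\<^sub>R oproj H u"
    using assms subspace_scale[OF subspace_orthogonal_comp oproj_in(2)[OF assms], of c u]
    by (intro oproj_eqI subspace_scale oproj_in(1)) (auto simp: algebra_simps)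
qed

locale bi_invariant_lie_algebra =
  fixes b :: "'a::euclidean_space \<Rightarrow> 'a \<Rightarrow> 'a"
  assumes lie_bracket: "lie_bracket b" and bi_invariant: "bi_invariant b"
begin

lemma bilinear_bracket: "bilinear b"
  using lie_bracket unfolding lie_bracket_def by blast

lemma bracket_antisym: "b x y = - b y x"
  using lie_bracket unfolding lie_bracket_def by blast

lemma bracket_jacobi: "b x (b y z) + b y (b z x) + b z (b x y) = 0"
  using lie_bracket unfolding lie_bracket_def by blast

lemma inner_bracket: "inner (b x y) z = inner x (b y z)"
  using bi_invariant unfolding bi_invariant_def by blast

lemma bracket_self [simp]: "b x x = 0"
  using bracket_antisym[of x x] by (simp add: eq_neg_iff_add_eq_0 flip: scaleR_2)

lemmas bracket_simps =
  bilinear_ladd[OF bilinear_bracket] bilinear_radd[OF bilinear_bracket]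
  bilinear_lmul[OF bilinear_bracket] bilinear_rmul[OF bilinear_bracket]
  bilinear_lneg[OF bilinear_bracket] bilinear_rneg[OF bilinear_bracket]
  bilinear_lsub[OF bilinear_bracket] bilinear_rsub[OF bilinear_bracket]
  bilinear_lzero[OF bilinear_bracket] bilinear_rzero[OF bilinear_bracket]

lemma inner_bracket_bracket:
  "inner (b x p) (b y q) = inner (b x y) (b p q) - inner (b x q) (b p y)"
proof -
  have "b p (b y q) = - b y (b q p) - b q (b p y)"
    using bracket_jacobi[of p y q] by (simp add: eq_neg_iff_add_eq_0 algebra_simps)
  then have "inner (b x p) (b y q) = - inner (b x y) (b q p) - inner (b x q) (b p y)"
    by (simp add: inner_bracket inner_diff_right)
  then show ?thesis
    using bracket_antisym[of q p] by simp
qed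

lemma bracket_subalgebra_orthogonal_comp:
  assumes "lie_subalgebra b H" "x \<in> H" "z \<in> H\<^sup>\<bottom>"
  shows "b x z \<in> H\<^sup>\<bottom>" and "b z x \<in> H\<^sup>\<bottom>"
proof -
  have "inner y (b z x) = 0" if "y \<in> H" for y
  proof -
    have "b x y \<in> H"
      using assms(1,2) that by (simp add: lie_subalgebra_def)
    then have "inner z (b x y) = 0"
      using assms(3) orthogonal_comp_inner(2) by blast
    then show ?thesis
      using inner_bracket[of z x y] inner_bracket[of y z x] bracket_antisym[of y z]
      by (simp add: inner_commute)
  qed
  then show "b z x \<in> H\<^sup>\<bottom>"
    by (simp add: orthogonal_comp_def orthogonal_def)
  then show "b x z \<in> H\<^sup>\<bottom>"
    using subspace_neg[OF subspace_orthogonal_comp] bracket_antisym[of x z] by metis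
qed

lemma oproj_bracket:
  assumes "lie_subalgebra b H"
  shows "oproj H (b X Y)
    = b (oproj H X) (oproj H Y) + oproj H (b (X - oproj H X) (Y - oproj H Y))"
proof -
  have H: "subspace H"
    using assms by (simp add: lie_subalgebra_def)
  define x y p q where "x = oproj H X" "y = oproj H Y" "p = X - x" "q = Y - y"
  have xy: "x \<in> H" "y \<in> H" and pq: "p \<in> H\<^sup>\<bottom>" "q \<in> H\<^sup>\<bottom>"
    using oproj_in[OF H] by (simp_all add: x_y_p_q_def)
  have "b X Y = b x y + (b x q + b p y) + b p q"
    by (simp add: x_y_p_q_def bracket_simps algebra_simps)
  moreover have "b x y \<in> H" "b x q + b p y \<in> H\<^sup>\<bottom>"
    using assms xy pq bracket_subalgebra_orthogonal_comp
    by (auto simp: lie_subalgebra_def intro: subspace_add[OF subspace_orthogonal_comp])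
  ultimately have "oproj H (b X Y) = oproj H (b x y + (b x q + b p y)) + oproj H (b p q)"
    using linear_add[OF linear_oproj[OF H], of "b x y + (b x q + b p y)" "b p q"] by simp
  also have "oproj H (b x y + (b x q + b p y)) = b x y"
    using oproj_add_orthogonal[OF H] \<open>b x y \<in> H\<close> \<open>b x q + b p y \<in> H\<^sup>\<bottom>\<close> by blast
  finally show ?thesis
    by (simp add: x_y_p_q_def)
qed

end

locale left_invariant_metric =
  bi_invariant_lie_algebra b for b :: "'a::euclidean_space \<Rightarrow> 'a \<Rightarrow> 'a" +
  fixes f f' :: "'a \<Rightarrow> 'a"
  assumes linear_f: "linear f"
    and self_adjoint_f: "inner (f u) v = inner u (f v)"
    and f_f': "f (f' w) = w"
    and f'_f: "f' (f w) = w"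
begin

abbreviation metric :: "'a \<Rightarrow> 'a \<Rightarrow> real" where
  "metric u v \<equiv> inner (f u) v"

definition sym_bracket :: "'a \<Rightarrow> 'a \<Rightarrow> 'a" where
  "sym_bracket U V = (1/2) *\<^sub>R (b U (f V) + b V (f U))"

lemmas f_simps = linear_add[OF linear_f] linear_diff[OF linear_f] linear_scale[OF linear_f]
  linear_neg[OF linear_f] linear_0[OF linear_f]

lemma self_adjoint_f': "inner (f' u) v = inner u (f' v)"
  by (metis f_f' self_adjoint_f)

lemma metric_commute: "metric u v = metric v u"
  by (metis self_adjoint_f inner_commute)

lemma sym_bracket_commute: "sym_bracket U V = sym_bracket V U"
  by (simp add: sym_bracket_def add.commute)

lemma metric_eqI:
  assumes "\<And>W. metric Z W = metric Z' W"
  shows "Z = Z'"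
proof -
  have "inner (f Z - f Z') (f Z - f Z') = 0"
    by (simp add: inner_diff_left assms)
  then have "f Z = f Z'"
    by simp
  then show ?thesis
    by (metis f'_f)
qed

lemma koszul_formula:
  "metric ((1/2) *\<^sub>R b U V + f' (sym_bracket U V)) W
     = (metric (b U V) W - metric (b V W) U + metric (b W U) V) / 2"
proof -
  have "metric (b V W) U = - inner W (b V (f U))"
    by (metis bracket_antisym inner_bracket inner_commute inner_minus_left self_adjoint_f)
  moreover have "metric (b W U) V = inner W (b U (f V))"
    by (simp add: inner_bracket self_adjoint_f)
  ultimately show ?thesis
    by (simp add: f_simps f_f' sym_bracket_def inner_add_left inner_commute[of W] field_simps)
qed

lemma lc_nabla_eq: "lc_nabla b metric U V = (1/2) *\<^sub>R b U V + f' (sym_bracket U V)"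
  unfolding lc_nabla_def
proof (rule the_equality)
  show "\<forall>W. metric ((1/2) *\<^sub>R b U V + f' (sym_bracket U V)) W
      = (metric (b U V) W - metric (b V W) U + metric (b W U) V) / 2"
    using koszul_formula by blast
  then show "Z = (1/2) *\<^sub>R b U V + f' (sym_bracket U V)"
    if "\<forall>W. metric Z W = (metric (b U V) W - metric (b V W) U + metric (b W U) V) / 2" for Z
    by (intro metric_eqI) (simp add: that koszul_formula)
qed

lemma lc_nabla_metric_compatible:
  "metric (lc_nabla b metric U V) W = - metric V (lc_nabla b metric U W)"
proof -
  have "metric (b V U) W = - metric (b U V) W" "metric (b W V) U = - metric (b V W) U"
    "metric (b U W) V = - metric (b W U) V"
    by (metis bracket_antisym f_simps(4) inner_minus_left)+
  moreover have "metric V (lc_nabla b metric U W) = metric (lc_nabla b metric U W) V"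
    by (rule metric_commute)
  ultimately show ?thesis
    unfolding lc_nabla_eq koszul_formula by simp
qed

theorem sec_curv_eq:
  "sec_curv b metric A B
     = (1/2) * inner (b A (f B) + b (f A) B) (b A B) - (3/4) * metric (b A B) (b A B)
       + inner (sym_bracket A B) (f' (sym_bracket A B))
       - inner (sym_bracket A A) (f' (sym_bracket B B))"
proof -
  define C where "C = b A B"
  define M where "M = sym_bracket A B"
  have nabla_self: "lc_nabla b metric U U = f' (sym_bracket U U)" for U
    by (simp add: lc_nabla_eq)
  have nabla_AB: "lc_nabla b metric A B = (1/2) *\<^sub>R C + f' M"
    by (simp add: lc_nabla_eq C_def M_def)
  have nabla_BA: "lc_nabla b metric B A = - (1/2) *\<^sub>R C + f' M"
    by (simp add: lc_nabla_eq C_def M_def sym_bracket_commute[of B] bracket_antisym[of B])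
  have "sec_curv b metric A B = metric (lc_nabla b metric A (lc_nabla b metric B B)) A
      - metric (lc_nabla b metric B (lc_nabla b metric A B)) A - metric (lc_nabla b metric C B) A"
    by (simp add: sec_curv_def curv_def f_simps inner_diff_left C_def)
  also have "\<dots> = - metric (lc_nabla b metric B B) (lc_nabla b metric A A)
      + metric (lc_nabla b metric A B) (lc_nabla b metric B A) - metric (lc_nabla b metric C B) A"
    by (simp add: lc_nabla_metric_compatible)
  also have "metric (lc_nabla b metric B B) (lc_nabla b metric A A)
      = inner (sym_bracket A A) (f' (sym_bracket B B))"
    unfolding nabla_self f_f' by (metis self_adjoint_f' inner_commute)
  also have "metric (lc_nabla b metric A B) (lc_nabla b metric B A)
      = - (1/4) * metric C C + inner M (f' M)"
    by (simp add: nabla_AB nabla_BA f_simps f_f' inner_add_left inner_diff_right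
        self_adjoint_f[of C "f' M"] inner_commute[of M C] field_simps)
  also have "metric (lc_nabla b metric C B) A
      = (inner C (b B (f A)) + metric C C - inner C (b A (f B))) / 2"
  proof -
    have "metric (b C B) A = inner C (b B (f A))"
      by (simp add: self_adjoint_f inner_bracket)
    moreover have "metric (b A C) B = - inner C (b A (f B))"
      by (metis bracket_antisym inner_bracket inner_minus_left self_adjoint_f)
    ultimately show ?thesis
      unfolding lc_nabla_eq koszul_formula
      by (simp add: C_def bracket_antisym[of B A] f_simps)
  qed
  finally show ?thesis
    by (simp add: C_def M_def inner_add_left inner_diff_left inner_commute[of "b A B"]
        bracket_antisym[of "f A" B] field_simps)
qed

end

lemma Phi_add_orthogonal:
  "subspace H \<Longrightarrow> y \<in> H \<Longrightarrow> z \<in> H\<^sup>\<bottom> \<Longrightarrow> Phi H t (y + z) = (1 / (1 - t)) *\<^sub>R y + z"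
  by (simp add: Phi_def oproj_add_orthogonal)

lemma Phi_inv_add_orthogonal:
  "subspace H \<Longrightarrow> y \<in> H \<Longrightarrow> z \<in> H\<^sup>\<bottom> \<Longrightarrow> Phi_inv H t (y + z) = (1 - t) *\<^sub>R y + z"
  by (simp add: Phi_inv_def oproj_add_orthogonal algebra_simps)

lemma Phi_inv_orthogonal_comp: "subspace H \<Longrightarrow> z \<in> H\<^sup>\<bottom> \<Longrightarrow> Phi_inv H t z = z"
  by (simp add: Phi_inv_def oproj_orthogonal_comp)

lemma inner_Phi:
  assumes "subspace H"
  shows "inner (Phi H t u) v
    = inner (oproj H u) (oproj H v) / (1 - t) + inner (u - oproj H u) (v - oproj H v)"
proof -
  have "inner (oproj H u) (v - oproj H v) = 0" "inner (u - oproj H u) (oproj H v) = 0"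
    using oproj_in[OF assms] orthogonal_comp_inner by blast+
  then have "inner (oproj H u) v = inner (oproj H u) (oproj H v)"
    "inner (u - oproj H u) v = inner (u - oproj H u) (v - oproj H v)"
    by (simp_all add: inner_diff_right)
  then show ?thesis
    by (simp add: Phi_def inner_add_left)
qed

lemma left_invariant_metric_Phi:
  assumes "lie_bracket b" "bi_invariant b" "subspace H" "t < 1"
  shows "left_invariant_metric b (Phi H t) (Phi_inv H t)"
proof (intro left_invariant_metric.intro left_invariant_metric_axioms.intro
    bi_invariant_lie_algebra.intro assms(1,2))
  show "linear (Phi H t)"
    using linear_oproj[OF assms(3)]
    by (auto intro!: linearI simp: Phi_def linear_add linear_scale algebra_simps)
  show "inner (Phi H t u) v = inner u (Phi H t v)" for u v
    using inner_Phi[OF assms(3)] by (metis inner_commute)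
  fix w
  let ?y = "oproj H w" and ?z = "w - oproj H w"
  have y: "?y \<in> H" "c *\<^sub>R ?y \<in> H" and z: "?z \<in> H\<^sup>\<bottom>" for c
    using assms(3) oproj_in subspace_scale by blast+
  have w: "w = ?y + ?z"
    by simp
  show "Phi H t (Phi_inv H t w) = w"
    using assms(4) Phi_inv_add_orthogonal[OF assms(3) y(1) z, folded w]
      Phi_add_orthogonal[OF assms(3) y(2) z] by simp
  show "Phi_inv H t (Phi H t w) = w"
    using assms(4) Phi_add_orthogonal[OF assms(3) y(1) z, folded w]
      Phi_inv_add_orthogonal[OF assms(3) y(2) z] by simp
qed

lemma kappa_orthogonal_decomposition:
  assumes "lie_bracket b" "bi_invariant b" "lie_subalgebra b H" "t < 1"
    and "x \<in> H" "y \<in> H" "p \<in> H\<^sup>\<bottom>" "q \<in> H\<^sup>\<bottom>"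
  defines "A \<equiv> (1 - t) *\<^sub>R x + p" and "B \<equiv> (1 - t) *\<^sub>R y + q"
  shows "kappa b H (x + p) (y + q) t
    = (1/2) * inner (b A (y + q) + b (x + p) B) (b A B)
      - (3/4) * inner (Phi H t (b A B)) (b A B)
      + (t\<^sup>2/4) * (norm (b x q + b y p))\<^sup>2 - t\<^sup>2 * inner (b x p) (b y q)"
proof -
  have H: "subspace H"
    using assms(3) by (simp add: lie_subalgebra_def)
  interpret left_invariant_metric b "Phi H t" "Phi_inv H t"
    using left_invariant_metric_Phi[OF assms(1,2) H assms(4)] .
  have A: "Phi_inv H t (x + p) = A" and B: "Phi_inv H t (y + q) = B"
    unfolding A_def B_def using Phi_inv_add_orthogonal H assms(5-8) by blast+
  then have fA: "Phi H t A = x + p" and fB: "Phi H t B = y + q"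
    using f_f' by metis+
  have ht: "ht H t = metric"
    by (simp add: ht_def fun_eq_iff)
  have orth: "b x p \<in> H\<^sup>\<bottom>" "b y q \<in> H\<^sup>\<bottom>" "b x q + b y p \<in> H\<^sup>\<bottom>"
    using bracket_subalgebra_orthogonal_comp[OF assms(3)] assms(5-8)
      subspace_add[OF subspace_orthogonal_comp] by blast+
  have S: "sym_bracket A A = (- t) *\<^sub>R b x p" "sym_bracket B B = (- t) *\<^sub>R b y q"
    "sym_bracket A B = (- t/2) *\<^sub>R (b x q + b y p)"
    unfolding sym_bracket_def fA fB unfolding A_def B_def
    by (simp_all add: bracket_simps bracket_antisym[of p x] bracket_antisym[of q y]
        bracket_antisym[of y x] bracket_antisym[of p y] bracket_antisym[of q x]
        bracket_antisym[of q p] algebra_simps flip: scaleR_2)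
  have "sym_bracket A B \<in> H\<^sup>\<bottom>" "sym_bracket B B \<in> H\<^sup>\<bottom>"
    unfolding S by (intro subspace_scale[OF subspace_orthogonal_comp] orth)+
  then have fixed: "Phi_inv H t (sym_bracket A B) = sym_bracket A B"
    "Phi_inv H t (sym_bracket B B) = sym_bracket B B"
    using Phi_inv_orthogonal_comp[OF H] by blast+
  show ?thesis
    unfolding kappa_def A B ht sec_curv_eq fA fB fixed unfolding S
    by (simp add: power2_eq_square inner_commute flip: power2_norm_eq_inner)
qed

lemma kappa_bracket_components:
  assumes "lie_bracket b" "bi_invariant b" "lie_subalgebra b H" "t < 1"
    and "x \<in> H" "y \<in> H" "p \<in> H\<^sup>\<bottom>" "q \<in> H\<^sup>\<bottom>"
    and "r \<in> H" "R \<in> H\<^sup>\<bottom>" "b p q = r + R"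
  defines "a \<equiv> 1 - t" and "u \<equiv> b x y" and "s \<equiv> b x q + b p y"
  shows "kappa b H (x + p) (y + q) t
    = (1/2) * inner ((2*a) *\<^sub>R u + (a+1) *\<^sub>R s + 2 *\<^sub>R (r + R)) (a\<^sup>2 *\<^sub>R u + a *\<^sub>R s + r + R)
      - (3/4) * inner ((1/a) *\<^sub>R (a\<^sup>2 *\<^sub>R u + r) + (a *\<^sub>R s + R)) (a\<^sup>2 *\<^sub>R u + a *\<^sub>R s + r + R)
      + (t\<^sup>2/4) * inner s s - t\<^sup>2 * inner u r"
proof -
  interpret bi_invariant_lie_algebra b
    using assms(1,2) by unfold_locales
  have H: "subspace H"
    using assms(3) by (simp add: lie_subalgebra_def)
  have u: "u \<in> H" and s: "s \<in> H\<^sup>\<bottom>"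
    using assms(3,5-8) bracket_subalgebra_orthogonal_comp
    by (auto simp: u_def s_def lie_subalgebra_def intro: subspace_add[OF subspace_orthogonal_comp])
  have "b (a *\<^sub>R x + p) (a *\<^sub>R y + q) = a\<^sup>2 *\<^sub>R u + a *\<^sub>R s + r + R"
    by (simp add: bracket_simps u_def s_def assms(11) power2_eq_square algebra_simps)
  moreover have "Phi H t (a\<^sup>2 *\<^sub>R u + a *\<^sub>R s + r + R) = (1/a) *\<^sub>R (a\<^sup>2 *\<^sub>R u + r) + (a *\<^sub>R s + R)"
  proof -
    have "a\<^sup>2 *\<^sub>R u + r \<in> H" "a *\<^sub>R s + R \<in> H\<^sup>\<bottom>"
      using u s assms(9,10) by (auto intro: subspace_add subspace_scale H subspace_orthogonal_comp)
    from Phi_add_orthogonal[OF H this] show ?thesis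
      by (simp add: a_def algebra_simps)
  qed
  moreover have "b (a *\<^sub>R x + p) (y + q) + b (x + p) (a *\<^sub>R y + q)
      = (2*a) *\<^sub>R u + (a+1) *\<^sub>R s + 2 *\<^sub>R (r + R)"
    by (simp add: bracket_simps u_def s_def assms(11) bracket_antisym[of y x] bracket_antisym[of q x]
        bracket_antisym[of q p] algebra_simps flip: scaleR_2)
  moreover have "(t\<^sup>2/4) * (norm (b x q + b y p))\<^sup>2 - t\<^sup>2 * inner (b x p) (b y q)
      = (t\<^sup>2/4) * inner s s - t\<^sup>2 * inner u r"
  proof -
    have "inner u R = 0"
      using orthogonal_comp_inner u assms(10) by blast
    then have jacobi: "inner (b x p) (b y q) = inner u r - inner (b x q) (b p y)"
      using inner_bracket_bracket[of x p y q] by (simp add: u_def assms(11) inner_add_right)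
    have swap: "b x q + b y p = b x q - b p y"
      by (simp add: bracket_antisym[of y p])
    show ?thesis
      unfolding power2_norm_eq_inner s_def jacobi swap
      by (simp add: inner_add_left inner_add_right inner_diff_left inner_diff_right
          inner_commute[of "b p y" "b x q"] algebra_simps)
  qed
  ultimately show ?thesis
    unfolding kappa_orthogonal_decomposition[OF assms(1-8), folded a_def] by simp
qed

lemma curvature_polynomial_identity:
  fixes u r s R :: "'a::real_inner" and t :: real
  assumes "t < 1"
    and "inner u s = 0" "inner u R = 0" "inner r s = 0" "inner r R = 0"
  defines "a \<equiv> 1 - t"
  shows "(1/2) * inner ((2*a) *\<^sub>R u + (a+1) *\<^sub>R s + 2 *\<^sub>R (r + R)) (a\<^sup>2 *\<^sub>R u + a *\<^sub>R s + r + R)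
      - (3/4) * inner ((1/a) *\<^sub>R (a\<^sup>2 *\<^sub>R u + r) + (a *\<^sub>R s + R)) (a\<^sup>2 *\<^sub>R u + a *\<^sub>R s + r + R)
      + (t\<^sup>2/4) * inner s s - t\<^sup>2 * inner u r
    = (1/4) * inner (u + s + r + R) (u + s + r + R)
      - (3/4) * inner (u + r) (u + r) * t + (3/4) * inner u u * t\<^sup>2 - (1/4) * inner u u * t^3
      - (3/4) * inner r r * (t\<^sup>2 / (1 - t))"
proof -
  have "a \<noteq> 0" and t: "t = 1 - a"
    using assms(1) by (simp_all add: a_def)
  have orth: "inner s u = 0" "inner R u = 0" "inner s r = 0" "inner R r = 0"
    using assms(2-5) by (simp_all add: inner_commute)
  show ?thesis
    unfolding t
    by (simp add: inner_add_left inner_add_right assms(2-5) orth inner_commute[of r u]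
        inner_commute[of R s])
      (simp add: \<open>a \<noteq> 0\<close> field_simps power2_eq_square power3_eq_cube)
qed

lemma kappa_eq:
  assumes "lie_bracket b" "bi_invariant b" "lie_subalgebra b H" "t < 1"
  shows "kappa b H X Y t =
      (1/4) * (norm (b X Y))\<^sup>2
    - (3/4) * (norm (oproj H (b X Y)))\<^sup>2 * t
    + (3/4) * (norm (b (oproj H X) (oproj H Y)))\<^sup>2 * t\<^sup>2
    - (1/4) * (norm (b (oproj H X) (oproj H Y)))\<^sup>2 * t^3
    - (3/4) * (norm (oproj H (b (X - oproj H X) (Y - oproj H Y))))\<^sup>2 * (t\<^sup>2 / (1 - t))"
proof -
  interpret bi_invariant_lie_algebra b
    using assms(1,2) by unfold_locales
  have H: "subspace H"
    using assms(3) by (simp add: lie_subalgebra_def)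
  define x y p q where "x = oproj H X" "y = oproj H Y" "p = X - x" "q = Y - y"
  have X: "X = x + p" and Y: "Y = y + q"
    by (simp_all add: x_y_p_q_def)
  have xy: "x \<in> H" "y \<in> H" and pq: "p \<in> H\<^sup>\<bottom>" "q \<in> H\<^sup>\<bottom>"
    using oproj_in[OF H] by (simp_all add: x_y_p_q_def)
  define u s r R where "u = b x y" "s = b x q + b p y" "r = oproj H (b p q)" "R = b p q - r"
  have in_h: "u \<in> H" "r \<in> H" and in_p: "s \<in> H\<^sup>\<bottom>" "R \<in> H\<^sup>\<bottom>"
    using assms(3) xy pq oproj_in[OF H] bracket_subalgebra_orthogonal_comp
    by (auto simp: u_s_r_R_def lie_subalgebra_def intro: subspace_add[OF subspace_orthogonal_comp])
  have pq_split: "b p q = r + R"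
    by (simp add: u_s_r_R_def)
  have "kappa b H X Y t = (1/4) * inner (u + s + r + R) (u + s + r + R)
      - (3/4) * inner (u + r) (u + r) * t + (3/4) * inner u u * t\<^sup>2 - (1/4) * inner u u * t^3
      - (3/4) * inner r r * (t\<^sup>2 / (1 - t))"
    unfolding X Y kappa_bracket_components[OF assms xy pq in_h(2) in_p(2) pq_split]
      u_s_r_R_def(1,2)[symmetric]
    using assms(4) orthogonal_comp_inner in_h in_p by (intro curvature_polynomial_identity) blast+
  moreover have "b X Y = u + s + r + R"
    unfolding X Y by (simp add: u_s_r_R_def bracket_simps algebra_simps)
  moreover have "oproj H (b X Y) = u + r"
    using oproj_bracket[OF assms(3), of X Y] by (simp add: x_y_p_q_def[symmetric] u_s_r_R_def)
  ultimately show ?thesis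
    unfolding power2_norm_eq_inner x_y_p_q_def[symmetric] u_s_r_R_def(1,3)[symmetric] by simp
qed

lemma kappa_eq_abelian:
  assumes "lie_bracket b" "bi_invariant b" "lie_subalgebra b H" "t < 1"
    and "\<forall>x\<in>H. \<forall>y\<in>H. b x y = 0"
  shows "kappa b H X Y t
    = (1/4) * (norm (b X Y))\<^sup>2 - (3/4) * (norm (oproj H (b X Y)))\<^sup>2 * (t / (1 - t))"
proof -
  interpret bi_invariant_lie_algebra b
    using assms(1,2) by unfold_locales
  have "subspace H"
    using assms(3) by (simp add: lie_subalgebra_def)
  then have "b (oproj H X) (oproj H Y) = 0"
    using assms(5) oproj_in(1) by blast
  moreover from this have "oproj H (b (X - oproj H X) (Y - oproj H Y)) = oproj H (b X Y)"
    using oproj_bracket[OF assms(3), of X Y] by simp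
  ultimately have "kappa b H X Y t = (1/4) * (norm (b X Y))\<^sup>2
      - (3/4) * (norm (oproj H (b X Y)))\<^sup>2 * (t + t\<^sup>2 / (1 - t))"
    using kappa_eq[OF assms(1-4), of X Y] by (simp add: distrib_left)
  moreover have "t + t\<^sup>2 / (1 - t) = t / (1 - t)"
    using assms(4) by (simp add: field_simps power2_eq_square)
  ultimately show ?thesis
    by simp
qed

theorem mainTheorem7:
  fixes b :: "'a::euclidean_space \<Rightarrow> 'a \<Rightarrow> 'a" and H :: "'a set"
  assumes "lie_bracket b" and "bi_invariant b" and "lie_subalgebra b H"
  shows "(\<forall>X Y t. t < 1 \<longrightarrow>
            kappa b H X Y t =
              (1/4) * (norm (b X Y))^2
            - (3/4) * (norm (oproj H (b X Y)))^2 * t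
            + (3/4) * (norm (b (oproj H X) (oproj H Y)))^2 * t^2
            - (1/4) * (norm (b (oproj H X) (oproj H Y)))^2 * t^3
            - (3/4) * (norm (oproj H (b (X - oproj H X) (Y - oproj H Y))))^2 * (t^2 / (1 - t)))
       \<and> ((\<forall>x\<in>H. \<forall>y\<in>H. b x y = 0) \<longrightarrow>
            (\<forall>X Y t. t < 1 \<longrightarrow>
              kappa b H X Y t =
                (1/4) * (norm (b X Y))^2 - (3/4) * (norm (oproj H (b X Y)))^2 * (t / (1 - t))))"
  using kappa_eq[OF assms] kappa_eq_abelian[OF assms] by blast

end
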